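(* Let $q\in\mathrm{prob}(\{0,1\}^2)$. Then $\{(\pi,\chi^{(1)}):(\pi,\chi)\in\Theta_2,\ \mu_2(\pi,\chi)=q\}=\{\theta\in\Theta_1:\mu_1(\theta)=q_{\cdot+}\}$ and $\{(\pi,\chi^{(2)}):(\pi,\chi)\in\Theta_2,\ \mu_2(\pi,\chi)=q\}=\{\theta\in\Theta_1:\mu_1(\theta)=q_{+\cdot}\}$, where $q_{\cdot+}\in\mathrm{prob}(\{0,1\})$ is $\iota\mapsto q_{\iota0}+q_{\iota1}$ and $q_{+\cdot}$ is $\iota\mapsto q_{0\iota}+q_{1\iota}$.
   Context: For a finite set $\mathcal{X}$, $\mathrm{prob}(\mathcal{X})$ is the set of probability densities on $\mathcal{X}$; $\mathrm{markov}(\mathcal{X},\mathcal{Y})$ the set of maps $(x,y)\mapsto p_{y|x}$ with $p_{\cdot|x}\in\mathrm{prob}(\mathcal{Y})$ for all $x$. For $d\in\{1,2\}$ let $\Theta_d:=\mathrm{prob}(\{0,1\})\times\mathrm{markov}(\{0,1\},\{0,1\}^d)$ and $\mu_d(\pi,\chi)_j:=\sum_{i=0}^1\pi_i\chi_{j|i}$ for $j\in\{0,1\}^d$. For $(\pi,\chi)\in\Theta_2$ and $i,\iota\in\{0,1\}$, $\chi^{(1)}_{\iota|i}:=\chi_{\iota0|i}+\chi_{\iota1|i}$ and $\chi^{(2)}_{\iota|i}:=\chi_{0\iota|i}+\chi_{1\iota|i}$, so $\chi^{(1)},\chi^{(2)}\in\mathrm{markov}(\{0,1\},\{0,1\})$.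 *)

theory Defs
  imports Complex_Main
begin

text \<open>The binary alphabet {0,1} is modelled by bool (False = 0, True = 1);
  {0,1}^2 by bool \<times> bool, the pair (a,b) standing for the word ab.\<close>

definition prob :: "('a::finite \<Rightarrow> real) set" where
  "prob = {p. (\<forall>x. 0 \<le> p x) \<and> (\<Sum>x\<in>UNIV. p x) = 1}"

text \<open>markov: chi x y = p_{y|x}.\<close>
definition markov :: "('a::finite \<Rightarrow> 'b::finite \<Rightarrow> real) set" where
  "markov = {chi. \<forall>x. chi x \<in> prob}"

definition Theta1 :: "((bool \<Rightarrow> real) \<times> (bool \<Rightarrow> bool \<Rightarrow> real)) set" where
  "Theta1 = prob \<times> markov"

definition Theta2 :: "((bool \<Rightarrow> real) \<times> (bool \<Rightarrow> bool \<times> bool \<Rightarrow> real)) set" where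
  "Theta2 = prob \<times> markov"

definition mu1 :: "(bool \<Rightarrow> real) \<times> (bool \<Rightarrow> bool \<Rightarrow> real) \<Rightarrow> bool \<Rightarrow> real" where
  "mu1 \<theta> j = (\<Sum>i\<in>UNIV. fst \<theta> i * snd \<theta> i j)"

definition mu2 :: "(bool \<Rightarrow> real) \<times> (bool \<Rightarrow> bool \<times> bool \<Rightarrow> real) \<Rightarrow> bool \<times> bool \<Rightarrow> real" where
  "mu2 \<theta> j = (\<Sum>i\<in>UNIV. fst \<theta> i * snd \<theta> i j)"

definition chi1 :: "(bool \<Rightarrow> bool \<times> bool \<Rightarrow> real) \<Rightarrow> bool \<Rightarrow> bool \<Rightarrow> real" where
  "chi1 chi i \<iota> = chi i (\<iota>, False) + chi i (\<iota>, True)"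

definition chi2 :: "(bool \<Rightarrow> bool \<times> bool \<Rightarrow> real) \<Rightarrow> bool \<Rightarrow> bool \<Rightarrow> real" where
  "chi2 chi i \<iota> = chi i (False, \<iota>) + chi i (True, \<iota>)"

definition marg1 :: "(bool \<times> bool \<Rightarrow> real) \<Rightarrow> bool \<Rightarrow> real" where
  "marg1 q \<iota> = q (\<iota>, False) + q (\<iota>, True)"

definition marg2 :: "(bool \<times> bool \<Rightarrow> real) \<Rightarrow> bool \<Rightarrow> real" where
  "marg2 q \<iota> = q (False, \<iota>) + q (True, \<iota>)"

end

theory Submission
  imports Defs
begin

text \<open>A kernel \<open>\<kappa>\<close> with \<open>\<mu>\<^sub>1(\<pi>, \<kappa>) = q\<^sub>\<cdot>\<^sub>+\<close> lifts to a kernel on words of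
  length two: split \<open>\<kappa> i a\<close> according to the conditional density \<open>q(a, b) / q(a, +)\<close>,
  which does not depend on \<open>i\<close>. The second marginal reduces to the first by swapping
  the two letters.\<close>

definition mixture :: "('i::finite \<Rightarrow> real) \<Rightarrow> ('i \<Rightarrow> 'j \<Rightarrow> real) \<Rightarrow> 'j \<Rightarrow> real" where
  "mixture \<pi> \<kappa> j = (\<Sum>i\<in>UNIV. \<pi> i * \<kappa> i j)"

definition fst_marginal :: "('a \<times> 'b::finite \<Rightarrow> real) \<Rightarrow> 'a \<Rightarrow> real" where
  "fst_marginal q a = (\<Sum>b\<in>UNIV. q (a, b))"

lemma mu1_eq_mixture: "mu1 \<theta> = mixture (fst \<theta>) (snd \<theta>)"
  by (simp add: fun_eq_iff mu1_def mixture_def)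

lemma mu2_eq_mixture: "mu2 \<theta> = mixture (fst \<theta>) (snd \<theta>)"
  by (simp add: fun_eq_iff mu2_def mixture_def)

lemma chi1_eq_fst_marginal: "chi1 \<chi> = (\<lambda>i. fst_marginal (\<chi> i))"
  by (simp add: fun_eq_iff chi1_def fst_marginal_def UNIV_bool add.commute)

lemma chi2_eq_fst_marginal_swap: "chi2 \<chi> = (\<lambda>i. fst_marginal (\<chi> i \<circ> prod.swap))"
  by (simp add: fun_eq_iff chi2_def fst_marginal_def UNIV_bool add.commute)

lemma marg1_eq_fst_marginal: "marg1 = fst_marginal"
  by (simp add: fun_eq_iff marg1_def fst_marginal_def UNIV_bool add.commute)

lemma marg2_eq_fst_marginal_swap: "marg2 q = fst_marginal (q \<circ> prod.swap)"
  by (simp add: fun_eq_iff marg2_def fst_marginal_def UNIV_bool add.commute)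

lemma sum_fst_marginal: "(\<Sum>a\<in>UNIV. fst_marginal q a) = (\<Sum>x\<in>UNIV. q x)"
  for q :: "'a::finite \<times> 'b::finite \<Rightarrow> real"
  by (simp add: fst_marginal_def sum.cartesian_product flip: UNIV_Times_UNIV)

lemma sum_comp_swap: "(\<Sum>x\<in>UNIV. (q \<circ> prod.swap) x) = (\<Sum>x\<in>UNIV. q x)"
  for q :: "'a::finite \<times> 'b::finite \<Rightarrow> real"
  using sum.reindex[of prod.swap UNIV q] by (simp add: product_swap flip: UNIV_Times_UNIV)

lemma fst_marginal_nonneg: "(\<And>x. 0 \<le> q x) \<Longrightarrow> 0 \<le> fst_marginal q a"
  by (simp add: fst_marginal_def sum_nonneg)

lemma fst_marginal_in_prob:
  assumes "p \<in> prob"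
  shows "fst_marginal p \<in> prob"
proof -
  have "\<And>x. 0 \<le> p x" "(\<Sum>x\<in>UNIV. p x) = 1"
    using assms by (auto simp: prob_def)
  then show ?thesis
    by (simp add: prob_def fst_marginal_nonneg sum_fst_marginal)
qed

lemma comp_swap_in_prob: "p \<in> prob \<Longrightarrow> p \<circ> prod.swap \<in> prob"
  using sum_comp_swap[of p] by (simp add: prob_def)

lemma comp_swap_in_markov: "\<chi> \<in> markov \<Longrightarrow> (\<lambda>i. \<chi> i \<circ> prod.swap) \<in> markov"
  by (simp add: markov_def comp_swap_in_prob)

lemma mixture_fst_marginal: "mixture \<pi> (\<lambda>i. fst_marginal (\<chi> i)) = fst_marginal (mixture \<pi> \<chi>)"
  unfolding fun_eq_iff mixture_def fst_marginal_def sum_distrib_left by (auto intro: sum.swap)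

lemma mixture_comp_swap: "mixture \<pi> (\<lambda>i. \<chi> i \<circ> prod.swap) = mixture \<pi> \<chi> \<circ> prod.swap"
  by (simp add: fun_eq_iff mixture_def)

text \<open>Where \<open>q(a, +) = 0\<close> any density will do; the uniform one is chosen.\<close>

lemma conditional_density_exists:
  fixes q :: "'a::finite \<times> 'b::finite \<Rightarrow> real"
  assumes nonneg: "\<And>x. 0 \<le> q x"
  obtains c :: "'a \<Rightarrow> 'b \<Rightarrow> real"
  where "c \<in> markov" "\<And>a b. q (a, b) = fst_marginal q a * c a b"
proof
  define c where "c a b = (if fst_marginal q a = 0 then 1 / real (card (UNIV :: 'b set))
                           else q (a, b) / fst_marginal q a)" for a b
  have null: "q (a, b) = 0" if "fst_marginal q a = 0" for a b
    using that nonneg by (simp add: fst_marginal_def sum_nonneg_eq_0_iff)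
  show "q (a, b) = fst_marginal q a * c a b" for a b
    by (simp add: c_def null)
  have "c a \<in> prob" for a
  proof (cases "fst_marginal q a = 0")
    case True
    then show ?thesis by (simp add: prob_def c_def)
  next
    case False
    then have "0 < fst_marginal q a"
      using fst_marginal_nonneg[of q, OF nonneg] by (simp add: order_le_neq_trans)
    then show ?thesis
      using False nonneg
      by (simp add: prob_def c_def fst_marginal_def flip: sum_divide_distrib)
  qed
  then show "c \<in> markov" by (simp add: markov_def)
qed

lemma lift_kernel_through_fst_marginal:
  fixes q :: "'a::finite \<times> 'b::finite \<Rightarrow> real" and \<pi> :: "'i::finite \<Rightarrow> real"
  assumes nonneg: "\<And>x. 0 \<le> q x" and \<kappa>: "\<kappa> \<in> markov"
    and mix: "mixture \<pi> \<kappa> = fst_marginal q"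
  obtains \<chi> where "\<chi> \<in> markov" "(\<lambda>i. fst_marginal (\<chi> i)) = \<kappa>" "mixture \<pi> \<chi> = q"
proof -
  obtain c :: "'a \<Rightarrow> 'b \<Rightarrow> real" where c: "c \<in> markov"
    and q_split: "\<And>a b. q (a, b) = fst_marginal q a * c a b"
    using conditional_density_exists nonneg by blast
  define \<chi> where "\<chi> i x = \<kappa> i (fst x) * c (fst x) (snd x)" for i x
  have c_sum: "(\<Sum>b\<in>UNIV. c a b) = 1" and c_nonneg: "0 \<le> c a b" for a b
    using c by (auto simp: markov_def prob_def)
  have marg: "(\<lambda>i. fst_marginal (\<chi> i)) = \<kappa>"
    by (simp add: fun_eq_iff fst_marginal_def \<chi>_def c_sum flip: sum_distrib_left)
  have "\<chi> i \<in> prob" for i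
    using \<kappa> sum_fst_marginal[of "\<chi> i"] fun_cong[OF marg, of i]
    by (auto simp: markov_def prob_def \<chi>_def c_nonneg)
  then have "\<chi> \<in> markov" by (simp add: markov_def)
  moreover have "mixture \<pi> \<chi> = q"
  proof
    fix x :: "'a \<times> 'b"
    obtain a b where x: "x = (a, b)" by fastforce
    have "mixture \<pi> \<chi> x = mixture \<pi> \<kappa> a * c a b"
      by (simp add: x mixture_def \<chi>_def sum_distrib_right mult.assoc)
    then show "mixture \<pi> \<chi> x = q x"
      by (simp add: x mix q_split)
  qed
  ultimately show thesis using that marg by blast
qed

lemma fst_marginal_kernel_lift_iff:
  fixes q :: "'a::finite \<times> 'b::finite \<Rightarrow> real" and \<pi> :: "'i::finite \<Rightarrow> real"
  assumes "\<And>x. 0 \<le> q x"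
  shows "(\<exists>\<chi>\<in>markov. (\<lambda>i. fst_marginal (\<chi> i)) = \<kappa> \<and> mixture \<pi> \<chi> = q)
         \<longleftrightarrow> \<kappa> \<in> markov \<and> mixture \<pi> \<kappa> = fst_marginal q"
proof
  assume "\<exists>\<chi>\<in>markov. (\<lambda>i. fst_marginal (\<chi> i)) = \<kappa> \<and> mixture \<pi> \<chi> = q"
  then show "\<kappa> \<in> markov \<and> mixture \<pi> \<kappa> = fst_marginal q"
    by (auto simp: markov_def fst_marginal_in_prob mixture_fst_marginal)
next
  assume "\<kappa> \<in> markov \<and> mixture \<pi> \<kappa> = fst_marginal q"
  then show "\<exists>\<chi>\<in>markov. (\<lambda>i. fst_marginal (\<chi> i)) = \<kappa> \<and> mixture \<pi> \<chi> = q"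
    using lift_kernel_through_fst_marginal[of q \<kappa> \<pi>] assms by blast
qed

lemma swap_kernel_lift_iff:
  "(\<exists>\<chi>\<in>markov. (\<lambda>i. fst_marginal (\<chi> i \<circ> prod.swap)) = \<kappa> \<and> mixture \<pi> \<chi> = q)
   \<longleftrightarrow> (\<exists>\<chi>\<in>markov. (\<lambda>i. fst_marginal (\<chi> i)) = \<kappa> \<and> mixture \<pi> \<chi> = q \<circ> prod.swap)"
  (is "?lhs \<longleftrightarrow> ?rhs")
proof
  assume ?lhs
  then obtain \<chi> where "\<chi> \<in> markov" "(\<lambda>i. fst_marginal (\<chi> i \<circ> prod.swap)) = \<kappa>" "mixture \<pi> \<chi> = q"
    by blast
  then show ?rhs
    by (intro bexI[of _ "\<lambda>i. \<chi> i \<circ> prod.swap"]) (auto simp: mixture_comp_swap comp_swap_in_markov)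
next
  assume ?rhs
  then obtain \<chi> where "\<chi> \<in> markov" "(\<lambda>i. fst_marginal (\<chi> i)) = \<kappa>" "mixture \<pi> \<chi> = q \<circ> prod.swap"
    by blast
  then show ?lhs
    by (intro bexI[of _ "\<lambda>i. \<chi> i \<circ> prod.swap"])
      (auto simp: mixture_comp_swap comp_swap_in_markov comp_assoc)
qed

theorem lemma2:
  fixes q :: "bool \<times> bool \<Rightarrow> real"
  assumes "q \<in> prob"
  shows "({(\<pi>, chi1 \<chi>) | \<pi> \<chi>. (\<pi>, \<chi>) \<in> Theta2 \<and> mu2 (\<pi>, \<chi>) = q}
           = {\<theta> \<in> Theta1. mu1 \<theta> = marg1 q}) \<and>
         ({(\<pi>, chi2 \<chi>) | \<pi> \<chi>. (\<pi>, \<chi>) \<in> Theta2 \<and> mu2 (\<pi>, \<chi>) = q}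
           = {\<theta> \<in> Theta1. mu1 \<theta> = marg2 q})"
proof
  have nonneg: "\<And>x. 0 \<le> q x" "\<And>x. 0 \<le> (q \<circ> prod.swap) x"
    using assms by (auto simp: prob_def)
  have "{(\<pi>, chi1 \<chi>) | \<pi> \<chi>. (\<pi>, \<chi>) \<in> Theta2 \<and> mu2 (\<pi>, \<chi>) = q}
        = {(\<pi>, \<kappa>). \<pi> \<in> prob \<and> (\<exists>\<chi>\<in>markov. (\<lambda>i. fst_marginal (\<chi> i)) = \<kappa> \<and> mixture \<pi> \<chi> = q)}"
    by (auto simp: Theta2_def mu2_eq_mixture chi1_eq_fst_marginal)
  also have "\<dots> = {\<theta> \<in> Theta1. mu1 \<theta> = marg1 q}"
    by (auto simp: fst_marginal_kernel_lift_iff[OF nonneg(1)] Theta1_def mu1_eq_mixture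
        marg1_eq_fst_marginal)
  finally show "{(\<pi>, chi1 \<chi>) | \<pi> \<chi>. (\<pi>, \<chi>) \<in> Theta2 \<and> mu2 (\<pi>, \<chi>) = q}
                = {\<theta> \<in> Theta1. mu1 \<theta> = marg1 q}" .
  have "{(\<pi>, chi2 \<chi>) | \<pi> \<chi>. (\<pi>, \<chi>) \<in> Theta2 \<and> mu2 (\<pi>, \<chi>) = q}
        = {(\<pi>, \<kappa>). \<pi> \<in> prob \<and>
             (\<exists>\<chi>\<in>markov. (\<lambda>i. fst_marginal (\<chi> i \<circ> prod.swap)) = \<kappa> \<and> mixture \<pi> \<chi> = q)}"
    by (auto simp: Theta2_def mu2_eq_mixture chi2_eq_fst_marginal_swap)
  also have "\<dots> = {\<theta> \<in> Theta1. mu1 \<theta> = marg2 q}"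
    unfolding swap_kernel_lift_iff fst_marginal_kernel_lift_iff[OF nonneg(2)]
    by (auto simp: Theta1_def mu1_eq_mixture marg2_eq_fst_marginal_swap comp_def)
  finally show "{(\<pi>, chi2 \<chi>) | \<pi> \<chi>. (\<pi>, \<chi>) \<in> Theta2 \<and> mu2 (\<pi>, \<chi>) = q}
                = {\<theta> \<in> Theta1. mu1 \<theta> = marg2 q}" .
qed

end
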